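(* Let $(\mathcal{C},\otimes,\mathbf{1},a,\ell,r)$ be a monoidal category. Then $\mathcal{C}_q$, with the monoidal product $*$, unit $(\emptyset,\emptyset)$, identity unit constraints and associativity constraint $a_q$, is a monoidal category which is non-strict (whenever $\mathcal{C}$ has at least one object), even if $\mathcal{C}$ is strict; and the functor $j:\mathcal{C}\to\mathcal{C}_q$, $j(X)=((X),\bullet)$, equipped with the constraints $u:(\emptyset,\emptyset)\to((\mathbf{1}),\bullet)$ and $\eta_{X,Y}:((X,Y),\bullet\bullet)\to((X\otimes Y),\bullet)$ corresponding to $\mathrm{Id}_{\mathbf{1}}$ and $\mathrm{Id}_{X\otimes Y}$, is a strong monoidal functor and an equivalence of categories. Hence every monoidal category is monoidally equivalent to a non-strict monoidal category.
   Context: $\mathrm{Mag}(\bullet)$ is the free unital magma on one generator $\bullet$ (parenthesised words in $\bullet$, including the empty word $\emptyset$); $|t|$ is the number of bullets in $t$. Non-strictification $\mathcal{C}_q$: objects are pairs $(S,t)$ with $S$ a finite sequence of objects of $\mathcal{C}$ and $t\in\mathrm{Mag}(\bullet)$ with $|t|$ equal to the length of $S$. Parenthesisation: $\mathrm{Par}(\emptyset,\emptyset)=\mathbf{1}$, $\mathrm{Par}((X),\bullet)=X$, and for $|t|>1$ write uniquely $t=t_1t_2$ with $|t_1|,|t_2|\ge1$ and $S=S_1*S_2$ with $S_k$ of length $|t_k|$, and set $\mathrm{Par}(S,t)=\mathrm{Par}(S_1,t_1)\otimes\mathrm{Par}(S_2,t_2)$. Morphisms: $\mathrm{Hom}_{\mathcal{C}_q}((S,t),(S',t')):=\mathrm{Hom}_{\mathcal{C}}(\mathrm{Par}(S,t),\mathrm{Par}(S',t'))$.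 Monoidal product: $(S,t)*(S',t'):=(S*S',tt')$ (concatenation of sequences, magma product of words), with $(\emptyset,\emptyset)$ a strict two-sided unit; for nonempty factors $\mathrm{Par}((S,t)*(S',t'))=\mathrm{Par}(S,t)\otimes\mathrm{Par}(S',t')$ and for morphisms $f,g$ one sets $f*g:=f\otimes g$ (with the evident conjugation by the unit isomorphisms $\ell,r$ of $\mathcal{C}$ when a factor is $(\emptyset,\emptyset)$). Left and right unit constraints are identities. The associativity constraint $a_q:((S,t)*(S',t'))*(S'',t'')=(S*S'*S'',(tt')t'')\to(S*S'*S'',t(t't''))$ is the morphism with $\mathrm{Par}(a_q)=a_{\mathrm{Par}(S,t),\mathrm{Par}(S',t'),\mathrm{Par}(S'',t'')}$. A monoidal category is strict if its associativity and unit constraints are identities, and non-strict otherwise. *)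

theory Defs
  imports Main
begin

record ('o,'m) cat =
  obj :: "'o set"
  mor :: "'m set"
  dom :: "'m \<Rightarrow> 'o"
  cod :: "'m \<Rightarrow> 'o"
  cmp :: "'m \<Rightarrow> 'm \<Rightarrow> 'm"   (* cmp g f = g o f, for cod f = dom g *)
  idm :: "'o \<Rightarrow> 'm"

definition hom :: "('o,'m,'x) cat_scheme \<Rightarrow> 'o \<Rightarrow> 'o \<Rightarrow> 'm set" where
  "hom C A B = {f \<in> mor C. dom C f = A \<and> cod C f = B}"

definition category :: "('o,'m,'x) cat_scheme \<Rightarrow> bool" where
  "category C \<longleftrightarrow>
     (\<forall>f\<in>mor C. dom C f \<in> obj C \<and> cod C f \<in> obj C)
   \<and> (\<forall>A\<in>obj C. idm C A \<in> hom C A A)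
   \<and> (\<forall>f\<in>mor C. \<forall>g\<in>mor C. cod C f = dom C g \<longrightarrow> cmp C g f \<in> hom C (dom C f) (cod C g))
   \<and> (\<forall>f\<in>mor C. cmp C (idm C (cod C f)) f = f \<and> cmp C f (idm C (dom C f)) = f)
   \<and> (\<forall>f\<in>mor C. \<forall>g\<in>mor C. \<forall>h\<in>mor C. cod C f = dom C g \<and> cod C g = dom C h \<longrightarrow>
        cmp C h (cmp C g f) = cmp C (cmp C h g) f)"

definition iso :: "('o,'m,'x) cat_scheme \<Rightarrow> 'm \<Rightarrow> bool" where
  "iso C f \<longleftrightarrow> f \<in> mor C \<and> (\<exists>g\<in>hom C (cod C f) (dom C f).
      cmp C g f = idm C (dom C f) \<and> cmp C f g = idm C (cod C f))"

definition cinv :: "('o,'m,'x) cat_scheme \<Rightarrow> 'm \<Rightarrow> 'm" where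
  "cinv C f = (THE g. g \<in> hom C (cod C f) (dom C f) \<and>
      cmp C g f = idm C (dom C f) \<and> cmp C f g = idm C (cod C f))"

definition "functor" :: "('o,'m,'x) cat_scheme \<Rightarrow> ('p,'n,'y) cat_scheme \<Rightarrow>
    ('o \<Rightarrow> 'p) \<Rightarrow> ('m \<Rightarrow> 'n) \<Rightarrow> bool" where
  "functor C D Fo Fm \<longleftrightarrow> category C \<and> category D
   \<and> (\<forall>A\<in>obj C. Fo A \<in> obj D)
   \<and> (\<forall>f\<in>mor C. Fm f \<in> hom D (Fo (dom C f)) (Fo (cod C f)))
   \<and> (\<forall>A\<in>obj C. Fm (idm C A) = idm D (Fo A))
   \<and> (\<forall>f\<in>mor C. \<forall>g\<in>mor C. cod C f = dom C g \<longrightarrow> Fm (cmp C g f) = cmp D (Fm g) (Fm f))"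

definition nat_iso :: "('o,'m,'x) cat_scheme \<Rightarrow> ('p,'n,'y) cat_scheme \<Rightarrow>
    ('o \<Rightarrow> 'p) \<Rightarrow> ('m \<Rightarrow> 'n) \<Rightarrow> ('o \<Rightarrow> 'p) \<Rightarrow> ('m \<Rightarrow> 'n) \<Rightarrow> ('o \<Rightarrow> 'n) \<Rightarrow> bool" where
  "nat_iso C D Fo Fm Go Gm \<theta> \<longleftrightarrow>
     (\<forall>A\<in>obj C. \<theta> A \<in> hom D (Fo A) (Go A) \<and> iso D (\<theta> A))
   \<and> (\<forall>f\<in>mor C. cmp D (\<theta> (cod C f)) (Fm f) = cmp D (Gm f) (\<theta> (dom C f)))"

definition equivalence :: "('o,'m,'x) cat_scheme \<Rightarrow> ('p,'n,'y) cat_scheme \<Rightarrow>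
    ('o \<Rightarrow> 'p) \<Rightarrow> ('m \<Rightarrow> 'n) \<Rightarrow> bool" where
  "equivalence C D Fo Fm \<longleftrightarrow> functor C D Fo Fm \<and>
     (\<exists>Go Gm \<theta> \<psi>. functor D C Go Gm
        \<and> nat_iso C C (\<lambda>A. A) (\<lambda>f. f) (\<lambda>A. Go (Fo A)) (\<lambda>f. Gm (Fm f)) \<theta>
        \<and> nat_iso D D (\<lambda>B. Fo (Go B)) (\<lambda>g. Fm (Gm g)) (\<lambda>B. B) (\<lambda>g. g) \<psi>)"

record ('o,'m) moncat = "('o,'m) cat" +
  tens :: "'o \<Rightarrow> 'o \<Rightarrow> 'o"
  tensm :: "'m \<Rightarrow> 'm \<Rightarrow> 'm"
  unitob :: "'o"
  assoc :: "'o \<Rightarrow> 'o \<Rightarrow> 'o \<Rightarrow> 'm"   (* (A x B) x E -> A x (B x E) *)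
  lunit :: "'o \<Rightarrow> 'm"                (* 1 x A -> A *)
  runit :: "'o \<Rightarrow> 'm"                (* A x 1 -> A *)

definition monoidal_category :: "('o,'m,'x) moncat_scheme \<Rightarrow> bool" where
  "monoidal_category C \<longleftrightarrow> category C
   \<and> unitob C \<in> obj C
   \<and> (\<forall>A\<in>obj C. \<forall>B\<in>obj C. tens C A B \<in> obj C)
   \<and> (\<forall>f\<in>mor C. \<forall>g\<in>mor C. tensm C f g \<in> hom C (tens C (dom C f) (dom C g)) (tens C (cod C f) (cod C g)))
   \<and> (\<forall>A\<in>obj C. \<forall>B\<in>obj C. tensm C (idm C A) (idm C B) = idm C (tens C A B))
   \<and> (\<forall>f\<in>mor C. \<forall>g\<in>mor C. \<forall>f'\<in>mor C. \<forall>g'\<in>mor C.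
        cod C f = dom C g \<and> cod C f' = dom C g' \<longrightarrow>
        tensm C (cmp C g f) (cmp C g' f') = cmp C (tensm C g g') (tensm C f f'))
   \<and> (\<forall>A\<in>obj C. \<forall>B\<in>obj C. \<forall>E\<in>obj C.
        assoc C A B E \<in> hom C (tens C (tens C A B) E) (tens C A (tens C B E)) \<and> iso C (assoc C A B E))
   \<and> (\<forall>f\<in>mor C. \<forall>g\<in>mor C. \<forall>h\<in>mor C.
        cmp C (assoc C (cod C f) (cod C g) (cod C h)) (tensm C (tensm C f g) h)
        = cmp C (tensm C f (tensm C g h)) (assoc C (dom C f) (dom C g) (dom C h)))
   \<and> (\<forall>A\<in>obj C. lunit C A \<in> hom C (tens C (unitob C) A) A \<and> iso C (lunit C A))
   \<and> (\<forall>A\<in>obj C. runit C A \<in> hom C (tens C A (unitob C)) A \<and> iso C (runit C A))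
   \<and> (\<forall>f\<in>mor C. cmp C (lunit C (cod C f)) (tensm C (idm C (unitob C)) f) = cmp C f (lunit C (dom C f)))
   \<and> (\<forall>f\<in>mor C. cmp C (runit C (cod C f)) (tensm C f (idm C (unitob C))) = cmp C f (runit C (dom C f)))
   \<and> (\<forall>A\<in>obj C. \<forall>B\<in>obj C. \<forall>E\<in>obj C. \<forall>G\<in>obj C.
        cmp C (assoc C A B (tens C E G)) (assoc C (tens C A B) E G)
        = cmp C (tensm C (idm C A) (assoc C B E G))
            (cmp C (assoc C A (tens C B E) G) (tensm C (assoc C A B E) (idm C G))))
   \<and> (\<forall>A\<in>obj C. \<forall>B\<in>obj C.
        cmp C (tensm C (idm C A) (lunit C B)) (assoc C A (unitob C) B) = tensm C (runit C A) (idm C B))"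

definition strict_monoidal :: "('o,'m,'x) moncat_scheme \<Rightarrow> bool" where
  "strict_monoidal C \<longleftrightarrow>
     (\<forall>A\<in>obj C. \<forall>B\<in>obj C. \<forall>E\<in>obj C.
        tens C (tens C A B) E = tens C A (tens C B E) \<and> assoc C A B E = idm C (tens C (tens C A B) E))
   \<and> (\<forall>A\<in>obj C. tens C (unitob C) A = A \<and> lunit C A = idm C A
                \<and> tens C A (unitob C) = A \<and> runit C A = idm C A)"

definition strong_monoidal_functor :: "('o,'m,'x) moncat_scheme \<Rightarrow> ('p,'n,'y) moncat_scheme \<Rightarrow>
    ('o \<Rightarrow> 'p) \<Rightarrow> ('m \<Rightarrow> 'n) \<Rightarrow> 'n \<Rightarrow> ('o \<Rightarrow> 'o \<Rightarrow> 'n) \<Rightarrow> bool" where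
  "strong_monoidal_functor C D Fo Fm u \<eta> \<longleftrightarrow>
     monoidal_category C \<and> monoidal_category D \<and> functor C D Fo Fm
   \<and> u \<in> hom D (unitob D) (Fo (unitob C)) \<and> iso D u
   \<and> (\<forall>A\<in>obj C. \<forall>B\<in>obj C. \<eta> A B \<in> hom D (tens D (Fo A) (Fo B)) (Fo (tens C A B)) \<and> iso D (\<eta> A B))
   \<and> (\<forall>f\<in>mor C. \<forall>g\<in>mor C.
        cmp D (\<eta> (cod C f) (cod C g)) (tensm D (Fm f) (Fm g))
        = cmp D (Fm (tensm C f g)) (\<eta> (dom C f) (dom C g)))
   \<and> (\<forall>A\<in>obj C. \<forall>B\<in>obj C. \<forall>E\<in>obj C.
        cmp D (Fm (assoc C A B E)) (cmp D (\<eta> (tens C A B) E) (tensm D (\<eta> A B) (idm D (Fo E))))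
        = cmp D (\<eta> A (tens C B E)) (cmp D (tensm D (idm D (Fo A)) (\<eta> B E)) (assoc D (Fo A) (Fo B) (Fo E))))
   \<and> (\<forall>A\<in>obj C.
        cmp D (Fm (lunit C A)) (cmp D (\<eta> (unitob C) A) (tensm D u (idm D (Fo A)))) = lunit D (Fo A))
   \<and> (\<forall>A\<in>obj C.
        cmp D (Fm (runit C A)) (cmp D (\<eta> A (unitob C)) (tensm D (idm D (Fo A)) u)) = runit D (Fo A))"

text \<open>Nonempty words are binary trees with leaves = bullets; None is the empty word.\<close>
datatype tree = Leaf | Node tree tree
type_synonym mag = "tree option"

fun tsize :: "tree \<Rightarrow> nat" where
  "tsize Leaf = 1"
| "tsize (Node a b) = tsize a + tsize b"

definition msize :: "mag \<Rightarrow> nat" where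
  "msize t = (case t of None \<Rightarrow> 0 | Some s \<Rightarrow> tsize s)"

fun mprod :: "mag \<Rightarrow> mag \<Rightarrow> mag" where
  "mprod None t = t"
| "mprod s None = s"
| "mprod (Some a) (Some b) = Some (Node a b)"

type_synonym 'o qobj = "'o list \<times> mag"
type_synonym ('o,'m) qmor = "'o qobj \<times> 'o qobj \<times> 'm"

fun tpar :: "('o,'m,'x) moncat_scheme \<Rightarrow> 'o list \<Rightarrow> tree \<Rightarrow> 'o" where
  "tpar C S Leaf = hd S"
| "tpar C S (Node a b) = tens C (tpar C (take (tsize a) S) a) (tpar C (drop (tsize a) S) b)"

definition Par :: "('o,'m,'x) moncat_scheme \<Rightarrow> 'o qobj \<Rightarrow> 'o" where
  "Par C x = (case snd x of None \<Rightarrow> unitob C | Some t \<Rightarrow> tpar C (fst x) t)"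

definition qunit :: "'o qobj" where "qunit = ([], None)"

definition qtens :: "'o qobj \<Rightarrow> 'o qobj \<Rightarrow> 'o qobj" where
  "qtens x y = (fst x @ fst y, mprod (snd x) (snd y))"

definition qphi :: "('o,'m,'x) moncat_scheme \<Rightarrow> 'o qobj \<Rightarrow> 'o qobj \<Rightarrow> 'm" where
  "qphi C x y = (if x = qunit then lunit C (Par C y)
                 else if y = qunit then runit C (Par C x)
                 else idm C (Par C (qtens x y)))"

definition Cq :: "('o,'m,'x) moncat_scheme \<Rightarrow> ('o qobj, ('o,'m) qmor) moncat" where
  "Cq C = \<lparr>
     obj = {x. set (fst x) \<subseteq> obj C \<and> length (fst x) = msize (snd x)},
     mor = {(x, y, f). set (fst x) \<subseteq> obj C \<and> length (fst x) = msize (snd x)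
                     \<and> set (fst y) \<subseteq> obj C \<and> length (fst y) = msize (snd y)
                     \<and> f \<in> hom C (Par C x) (Par C y)},
     dom = (\<lambda>(x, y, f). x),
     cod = (\<lambda>(x, y, f). y),
     cmp = (\<lambda>(y, z, g) (x, y', f). (x, z, cmp C g f)),
     idm = (\<lambda>x. (x, x, idm C (Par C x))),
     tens = qtens,
     tensm = (\<lambda>(x, y, f) (x', y', g). (qtens x x', qtens y y',
                 cmp C (qphi C y y') (cmp C (tensm C f g) (cinv C (qphi C x x'))))),
     unitob = qunit,
     assoc = (\<lambda>x y z. (qtens (qtens x y) z, qtens x (qtens y z),
                 if x = qunit \<or> y = qunit \<or> z = qunit then idm C (Par C (qtens (qtens x y) z))
                 else assoc C (Par C x) (Par C y) (Par C z))),
     lunit = (\<lambda>x. (x, x, idm C (Par C x))),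
     runit = (\<lambda>x. (x, x, idm C (Par C x)))
   \<rparr>"

definition jo :: "'o \<Rightarrow> 'o qobj" where "jo X = ([X], Some Leaf)"

definition jm :: "('o,'m,'x) moncat_scheme \<Rightarrow> 'm \<Rightarrow> ('o,'m) qmor" where
  "jm C f = (jo (dom C f), jo (cod C f), f)"

definition ju :: "('o,'m,'x) moncat_scheme \<Rightarrow> ('o,'m) qmor" where
  "ju C = (qunit, jo (unitob C), idm C (unitob C))"

definition jeta :: "('o,'m,'x) moncat_scheme \<Rightarrow> 'o \<Rightarrow> 'o \<Rightarrow> ('o,'m) qmor" where
  "jeta C X Y = (([X, Y], Some (Node Leaf Leaf)), jo (tens C X Y), idm C (tens C X Y))"

end

theory Submission
  imports Defs
begin

text \<open>A word \<open>x = (S, t)\<close> of \<open>C\<^sub>q\<close> is interpreted in \<open>C\<close> by its parenthesisation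
  \<open>Par x\<close>, and \<open>C\<^sub>q(x, y) = C(Par x, Par y)\<close>. Hence \<open>Par\<close> is fully faithful, and it is
  a quasi-inverse of \<open>j\<close> because \<open>x\<close> is isomorphic to the one-letter word \<open>j (Par x)\<close>.
  The tensor of morphisms of \<open>C\<^sub>q\<close> is that of \<open>C\<close> conjugated by canonical isomorphisms
  \<open>\<phi> : Par x \<otimes> Par y \<rightarrow> Par (x * y)\<close> (identities, or unit constraints when a word is empty),
  and \<open>a\<^sub>q\<close> is \<open>\<alpha>\<close> on nonempty words and the identity otherwise. Since \<open>a\<^sub>q \<circ> \<phi> = \<phi> \<circ> \<alpha>\<close>
  for the composite canonical isomorphisms \<open>\<phi>\<close> (by Kelly's identities
  \<open>\<lambda>\<^bsub>X\<otimes>Y\<^esub> \<circ> \<alpha> = \<lambda>\<^sub>X \<otimes> 1\<close>, \<open>(1 \<otimes> \<rho>\<^sub>Y) \<circ> \<alpha> = \<rho>\<^bsub>X\<otimes>Y\<^esub>\<close> and \<open>\<lambda>\<^sub>1 = \<rho>\<^sub>1\<close> in the degenerate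
  cases), every monoidal axiom of \<open>C\<^sub>q\<close> is transported from \<open>C\<close>; and \<open>j\<close> is strong monoidal
  with identity constraints. \<open>C\<^sub>q\<close> is not strict because \<open>(\<bullet>\<bullet>)\<bullet> \<noteq> \<bullet>(\<bullet>\<bullet>)\<close> in the free magma.\<close>

section \<open>Consequences of the monoidal axioms\<close>

locale monoidal =
  fixes C :: "('o,'m,'x) moncat_scheme"
  assumes monoidal_category: "monoidal_category C"
begin

lemma category: "category C"
  using monoidal_category by (simp add: monoidal_category_def)

lemma dom_in_obj [simp]: "f \<in> mor C \<Longrightarrow> dom C f \<in> obj C"
  using category by (simp add: category_def)
lemma cod_in_obj [simp]: "f \<in> mor C \<Longrightarrow> cod C f \<in> obj C"
  using category by (simp add: category_def)
lemma idm_in_mor [simp]: "X \<in> obj C \<Longrightarrow> idm C X \<in> mor C"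
  using category by (simp add: category_def hom_def)
lemma dom_idm [simp]: "X \<in> obj C \<Longrightarrow> dom C (idm C X) = X"
  using category by (simp add: category_def hom_def)
lemma cod_idm [simp]: "X \<in> obj C \<Longrightarrow> cod C (idm C X) = X"
  using category by (simp add: category_def hom_def)
lemma cmp_in_mor [simp]:
  "f \<in> mor C \<Longrightarrow> g \<in> mor C \<Longrightarrow> cod C f = dom C g \<Longrightarrow> cmp C g f \<in> mor C"
  using category by (simp add: category_def hom_def)
lemma dom_cmp [simp]:
  "f \<in> mor C \<Longrightarrow> g \<in> mor C \<Longrightarrow> cod C f = dom C g \<Longrightarrow> dom C (cmp C g f) = dom C f"
  using category by (simp add: category_def hom_def)
lemma cod_cmp [simp]:
  "f \<in> mor C \<Longrightarrow> g \<in> mor C \<Longrightarrow> cod C f = dom C g \<Longrightarrow> cod C (cmp C g f) = cod C g"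
  using category by (simp add: category_def hom_def)
lemma cmp_assoc [simp]:
  "f \<in> mor C \<Longrightarrow> g \<in> mor C \<Longrightarrow> h \<in> mor C \<Longrightarrow> cod C f = dom C g \<Longrightarrow> cod C g = dom C h
   \<Longrightarrow> cmp C (cmp C h g) f = cmp C h (cmp C g f)"
  using category unfolding category_def by metis
lemma cmp_idm_left [simp]: "f \<in> mor C \<Longrightarrow> cod C f = Y \<Longrightarrow> cmp C (idm C Y) f = f"
  using category unfolding category_def by metis
lemma cmp_idm_right [simp]: "f \<in> mor C \<Longrightarrow> dom C f = X \<Longrightarrow> cmp C f (idm C X) = f"
  using category unfolding category_def by metis

lemma cmp_assoc_left:
  "cmp C g f = k \<Longrightarrow> e \<in> mor C \<Longrightarrow> f \<in> mor C \<Longrightarrow> g \<in> mor C \<Longrightarrow> cod C e = dom C f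
   \<Longrightarrow> cod C f = dom C g \<Longrightarrow> cmp C g (cmp C f e) = cmp C k e"
  using cmp_assoc[of e f g] by simp

lemma unitob_in_obj [simp]: "unitob C \<in> obj C"
  using monoidal_category by (simp add: monoidal_category_def)
lemma tens_in_obj [simp]: "X \<in> obj C \<Longrightarrow> Y \<in> obj C \<Longrightarrow> tens C X Y \<in> obj C"
  using monoidal_category by (simp add: monoidal_category_def)
lemma tensm_in_mor [simp]: "f \<in> mor C \<Longrightarrow> g \<in> mor C \<Longrightarrow> tensm C f g \<in> mor C"
  using monoidal_category by (simp add: monoidal_category_def hom_def)
lemma dom_tensm [simp]:
  "f \<in> mor C \<Longrightarrow> g \<in> mor C \<Longrightarrow> dom C (tensm C f g) = tens C (dom C f) (dom C g)"
  using monoidal_category by (simp add: monoidal_category_def hom_def)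
lemma cod_tensm [simp]:
  "f \<in> mor C \<Longrightarrow> g \<in> mor C \<Longrightarrow> cod C (tensm C f g) = tens C (cod C f) (cod C g)"
  using monoidal_category by (simp add: monoidal_category_def hom_def)
lemma tensm_idm [simp]:
  "X \<in> obj C \<Longrightarrow> Y \<in> obj C \<Longrightarrow> tensm C (idm C X) (idm C Y) = idm C (tens C X Y)"
  using monoidal_category by (simp add: monoidal_category_def)
lemma interchange:
  "f \<in> mor C \<Longrightarrow> g \<in> mor C \<Longrightarrow> f' \<in> mor C \<Longrightarrow> g' \<in> mor C \<Longrightarrow>
   cod C f = dom C g \<Longrightarrow> cod C f' = dom C g' \<Longrightarrow>
   tensm C (cmp C g f) (cmp C g' f') = cmp C (tensm C g g') (tensm C f f')"
  using monoidal_category unfolding monoidal_category_def by blast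

lemma assoc_in_mor [simp]:
  "X \<in> obj C \<Longrightarrow> Y \<in> obj C \<Longrightarrow> Z \<in> obj C \<Longrightarrow> assoc C X Y Z \<in> mor C"
  using monoidal_category by (simp add: monoidal_category_def hom_def)
lemma dom_assoc [simp]:
  "X \<in> obj C \<Longrightarrow> Y \<in> obj C \<Longrightarrow> Z \<in> obj C \<Longrightarrow> dom C (assoc C X Y Z) = tens C (tens C X Y) Z"
  using monoidal_category by (simp add: monoidal_category_def hom_def)
lemma cod_assoc [simp]:
  "X \<in> obj C \<Longrightarrow> Y \<in> obj C \<Longrightarrow> Z \<in> obj C \<Longrightarrow> cod C (assoc C X Y Z) = tens C X (tens C Y Z)"
  using monoidal_category by (simp add: monoidal_category_def hom_def)
lemma iso_assoc [simp]: "X \<in> obj C \<Longrightarrow> Y \<in> obj C \<Longrightarrow> Z \<in> obj C \<Longrightarrow> iso C (assoc C X Y Z)"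
  using monoidal_category by (simp add: monoidal_category_def)
lemma assoc_natural:
  "f \<in> mor C \<Longrightarrow> g \<in> mor C \<Longrightarrow> h \<in> mor C \<Longrightarrow>
   cmp C (assoc C (cod C f) (cod C g) (cod C h)) (tensm C (tensm C f g) h)
   = cmp C (tensm C f (tensm C g h)) (assoc C (dom C f) (dom C g) (dom C h))"
  using monoidal_category unfolding monoidal_category_def by blast

lemma lunit_in_mor [simp]: "X \<in> obj C \<Longrightarrow> lunit C X \<in> mor C"
  using monoidal_category by (simp add: monoidal_category_def hom_def)
lemma dom_lunit [simp]: "X \<in> obj C \<Longrightarrow> dom C (lunit C X) = tens C (unitob C) X"
  using monoidal_category by (simp add: monoidal_category_def hom_def)
lemma cod_lunit [simp]: "X \<in> obj C \<Longrightarrow> cod C (lunit C X) = X"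
  using monoidal_category by (simp add: monoidal_category_def hom_def)
lemma iso_lunit [simp]: "X \<in> obj C \<Longrightarrow> iso C (lunit C X)"
  using monoidal_category by (simp add: monoidal_category_def)
lemma runit_in_mor [simp]: "X \<in> obj C \<Longrightarrow> runit C X \<in> mor C"
  using monoidal_category by (simp add: monoidal_category_def hom_def)
lemma dom_runit [simp]: "X \<in> obj C \<Longrightarrow> dom C (runit C X) = tens C X (unitob C)"
  using monoidal_category by (simp add: monoidal_category_def hom_def)
lemma cod_runit [simp]: "X \<in> obj C \<Longrightarrow> cod C (runit C X) = X"
  using monoidal_category by (simp add: monoidal_category_def hom_def)
lemma iso_runit [simp]: "X \<in> obj C \<Longrightarrow> iso C (runit C X)"
  using monoidal_category by (simp add: monoidal_category_def)
lemma lunit_natural: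
  "f \<in> mor C \<Longrightarrow>
   cmp C (lunit C (cod C f)) (tensm C (idm C (unitob C)) f) = cmp C f (lunit C (dom C f))"
  using monoidal_category unfolding monoidal_category_def by blast
lemma runit_natural:
  "f \<in> mor C \<Longrightarrow>
   cmp C (runit C (cod C f)) (tensm C f (idm C (unitob C))) = cmp C f (runit C (dom C f))"
  using monoidal_category unfolding monoidal_category_def by blast

lemma pentagon:
  "W \<in> obj C \<Longrightarrow> X \<in> obj C \<Longrightarrow> Y \<in> obj C \<Longrightarrow> Z \<in> obj C \<Longrightarrow>
   cmp C (assoc C W X (tens C Y Z)) (assoc C (tens C W X) Y Z)
   = cmp C (tensm C (idm C W) (assoc C X Y Z))
       (cmp C (assoc C W (tens C X Y) Z) (tensm C (assoc C W X Y) (idm C Z)))"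
  using monoidal_category unfolding monoidal_category_def by blast
lemma triangle:
  "X \<in> obj C \<Longrightarrow> Y \<in> obj C \<Longrightarrow>
   cmp C (tensm C (idm C X) (lunit C Y)) (assoc C X (unitob C) Y) = tensm C (runit C X) (idm C Y)"
  using monoidal_category unfolding monoidal_category_def by blast

lemma inverse_unique:
  assumes "f \<in> mor C" "g \<in> hom C (cod C f) (dom C f)" "cmp C g f = idm C (dom C f)"
    and "g' \<in> hom C (cod C f) (dom C f)" "cmp C f g' = idm C (cod C f)"
  shows "g = g'"
proof -
  have "g = cmp C g (cmp C f g')" using assms by (simp add: hom_def)
  also have "\<dots> = cmp C (cmp C g f) g'" using assms(1,2,4) cmp_assoc[of g' f g] by (simp add: hom_def)
  also have "\<dots> = g'" using assms by (simp add: hom_def)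
  finally show ?thesis .
qed

lemma cinv_inverse:
  assumes "iso C f"
  shows "cinv C f \<in> hom C (cod C f) (dom C f) \<and> cmp C (cinv C f) f = idm C (dom C f)
         \<and> cmp C f (cinv C f) = idm C (cod C f)"
proof -
  obtain g where g: "g \<in> hom C (cod C f) (dom C f)" "cmp C g f = idm C (dom C f)"
      "cmp C f g = idm C (cod C f)" and f: "f \<in> mor C"
    using assms unfolding iso_def by blast
  show ?thesis unfolding cinv_def
    by (rule theI[of _ g]) (use g f inverse_unique in blast)+
qed

lemma iso_in_mor: "iso C f \<Longrightarrow> f \<in> mor C"
  by (simp add: iso_def)
lemma cinv_in_mor [simp]: "iso C f \<Longrightarrow> cinv C f \<in> mor C"
  using cinv_inverse by (simp add: hom_def)
lemma dom_cinv [simp]: "iso C f \<Longrightarrow> dom C (cinv C f) = cod C f"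
  using cinv_inverse by (simp add: hom_def)
lemma cod_cinv [simp]: "iso C f \<Longrightarrow> cod C (cinv C f) = dom C f"
  using cinv_inverse by (simp add: hom_def)
lemma cmp_cinv_left [simp]: "iso C f \<Longrightarrow> cmp C (cinv C f) f = idm C (dom C f)"
  using cinv_inverse by blast
lemma cmp_cinv_right [simp]: "iso C f \<Longrightarrow> cmp C f (cinv C f) = idm C (cod C f)"
  using cinv_inverse by blast
lemma cmp_cinv_cancel_left [simp]:
  "iso C f \<Longrightarrow> g \<in> mor C \<Longrightarrow> cod C g = dom C f \<Longrightarrow> cmp C (cinv C f) (cmp C f g) = g"
  by (subst cmp_assoc[symmetric]) (auto simp: iso_in_mor)
lemma cmp_cinv_cancel_right [simp]:
  "iso C f \<Longrightarrow> g \<in> mor C \<Longrightarrow> cod C g = cod C f \<Longrightarrow> cmp C f (cmp C (cinv C f) g) = g"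
  by (subst cmp_assoc[symmetric]) (auto simp: iso_in_mor)

lemma iso_cancel_right:
  assumes "iso C f" "g \<in> mor C" "h \<in> mor C" "dom C g = cod C f" "dom C h = cod C f"
    and "cmp C g f = cmp C h f"
  shows "g = h"
proof -
  have "g = cmp C (cmp C g f) (cinv C f)" using assms(1-5) by (simp add: iso_in_mor)
  also have "\<dots> = h" unfolding assms(6) using assms(1-5) by (simp add: iso_in_mor)
  finally show ?thesis .
qed

lemma iso_cancel_left:
  assumes "iso C f" "g \<in> mor C" "h \<in> mor C" "cod C g = dom C f" "cod C h = dom C f"
    and "cmp C f g = cmp C f h"
  shows "g = h"
proof -
  have "g = cmp C (cinv C f) (cmp C f g)" using assms(1-5) by (simp add: iso_in_mor)
  also have "\<dots> = h" unfolding assms(6) using assms(1-5) by (simp add: iso_in_mor)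
  finally show ?thesis .
qed

lemma iso_idm [simp]: "X \<in> obj C \<Longrightarrow> iso C (idm C X)"
  unfolding iso_def by (rule conjI, simp, rule bexI[of _ "idm C X"]) (auto simp: hom_def)

lemma iso_cmp: "iso C f \<Longrightarrow> iso C g \<Longrightarrow> cod C f = dom C g \<Longrightarrow> iso C (cmp C g f)"
  unfolding iso_def[of C "cmp C g f"]
  by (rule conjI, simp add: iso_in_mor, rule bexI[of _ "cmp C (cinv C f) (cinv C g)"])
     (auto simp: hom_def iso_in_mor)

lemma iso_tensm: "iso C f \<Longrightarrow> iso C g \<Longrightarrow> iso C (tensm C f g)"
  unfolding iso_def[of C "tensm C f g"]
  by (rule conjI, simp add: iso_in_mor, rule bexI[of _ "tensm C (cinv C f) (cinv C g)"])
     (auto simp: hom_def iso_in_mor interchange[symmetric])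

lemma cinv_idm [simp]: "X \<in> obj C \<Longrightarrow> cinv C (idm C X) = idm C X"
  using cmp_idm_left[of "cinv C (idm C X)" X] cmp_cinv_right[of "idm C X"] by simp

lemma tensm_unit_right_inj:
  assumes "f \<in> mor C" "g \<in> mor C" "dom C f = dom C g" "cod C f = cod C g"
    and "tensm C f (idm C (unitob C)) = tensm C g (idm C (unitob C))"
  shows "f = g"
proof (rule iso_cancel_right[OF iso_runit[of "dom C f"]])
  show "cmp C f (runit C (dom C f)) = cmp C g (runit C (dom C f))"
    using runit_natural[OF assms(1)] runit_natural[OF assms(2)] assms(3-5) by simp
qed (use assms(1-3) in simp_all)

lemma tensm_unit_left_inj:
  assumes "f \<in> mor C" "g \<in> mor C" "dom C f = dom C g" "cod C f = cod C g"
    and "tensm C (idm C (unitob C)) f = tensm C (idm C (unitob C)) g"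
  shows "f = g"
proof (rule iso_cancel_right[OF iso_lunit[of "dom C f"]])
  show "cmp C f (lunit C (dom C f)) = cmp C g (lunit C (dom C f))"
    using lunit_natural[OF assms(1)] lunit_natural[OF assms(2)] assms(3-5) by simp
qed (use assms(1-3) in simp_all)

lemma runit_tens:
  assumes X: "X \<in> obj C" and Y: "Y \<in> obj C"
  shows "cmp C (tensm C (idm C X) (runit C Y)) (assoc C X Y (unitob C)) = runit C (tens C X Y)"
proof -
  define I where "I = unitob C"
  have I: "I \<in> obj C" by (simp add: I_def)
  note objs = X Y I
  have "cmp C (assoc C X Y I) (tensm C (runit C (tens C X Y)) (idm C I))
      = cmp C (assoc C X Y I) (cmp C (tensm C (idm C (tens C X Y)) (lunit C I)) (assoc C (tens C X Y) I I))"
    using triangle[of "tens C X Y" I] objs by (simp add: I_def)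
  also have "\<dots> = cmp C (tensm C (idm C X) (tensm C (idm C Y) (lunit C I)))
                     (cmp C (assoc C X Y (tens C I I)) (assoc C (tens C X Y) I I))"
    using cmp_assoc_left[OF assoc_natural[of "idm C X" "idm C Y" "lunit C I"]] objs by (simp add: I_def)
  also have "\<dots> = cmp C (tensm C (idm C X) (tensm C (idm C Y) (lunit C I)))
                     (cmp C (tensm C (idm C X) (assoc C Y I I))
                       (cmp C (assoc C X (tens C Y I) I) (tensm C (assoc C X Y I) (idm C I))))"
    using pentagon[of X Y I I] objs by simp
  also have "\<dots> = cmp C (tensm C (idm C X) (tensm C (runit C Y) (idm C I)))
                     (cmp C (assoc C X (tens C Y I) I) (tensm C (assoc C X Y I) (idm C I)))"
    using cmp_assoc_left[OF interchange[of "idm C X" "idm C X" "assoc C Y I I" "tensm C (idm C Y) (lunit C I)", symmetric]]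
      triangle[of Y I] objs by (simp add: I_def)
  also have "\<dots> = cmp C (assoc C X Y I) (cmp C (tensm C (tensm C (idm C X) (runit C Y)) (idm C I))
                     (tensm C (assoc C X Y I) (idm C I)))"
    using cmp_assoc_left[OF assoc_natural[of "idm C X" "runit C Y" "idm C I", symmetric]] objs by (simp add: I_def)
  also have "\<dots> = cmp C (assoc C X Y I)
                     (tensm C (cmp C (tensm C (idm C X) (runit C Y)) (assoc C X Y I)) (idm C I))"
    using interchange[of "assoc C X Y I" "tensm C (idm C X) (runit C Y)" "idm C I" "idm C I"] objs
    by (simp add: I_def)
  finally have "tensm C (runit C (tens C X Y)) (idm C I)
      = tensm C (cmp C (tensm C (idm C X) (runit C Y)) (assoc C X Y I)) (idm C I)"
    by (rule iso_cancel_left[OF iso_assoc[OF objs], rotated -1]) (use objs in \<open>simp_all add: I_def\<close>)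
  then show ?thesis
    unfolding I_def by (rule tensm_unit_right_inj[symmetric, rotated -1]) (use X Y in simp_all)
qed

lemma lunit_tens:
  assumes X: "X \<in> obj C" and Y: "Y \<in> obj C"
  shows "cmp C (lunit C (tens C X Y)) (assoc C (unitob C) X Y) = tensm C (lunit C X) (idm C Y)"
proof -
  define I where "I = unitob C"
  have I: "I \<in> obj C" by (simp add: I_def)
  note objs = X Y I
  define M where "M = cmp C (assoc C I (tens C I X) Y) (tensm C (assoc C I I X) (idm C Y))"
  have M: "iso C M" "M \<in> mor C" "dom C M = tens C (tens C (tens C I I) X) Y"
      "cod C M = tens C I (tens C (tens C I X) Y)"
    unfolding M_def using objs by (auto intro!: iso_cmp iso_tensm iso_assoc)
  have "cmp C (tensm C (idm C I) (tensm C (lunit C X) (idm C Y))) M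
      = cmp C (assoc C I X Y) (cmp C (tensm C (tensm C (idm C I) (lunit C X)) (idm C Y))
          (tensm C (assoc C I I X) (idm C Y)))"
    unfolding M_def
    using cmp_assoc_left[OF assoc_natural[of "idm C I" "lunit C X" "idm C Y", symmetric]] objs
    by (simp add: I_def)
  also have "\<dots> = cmp C (assoc C I X Y) (tensm C (tensm C (runit C I) (idm C X)) (idm C Y))"
    using interchange[of "assoc C I I X" "tensm C (idm C I) (lunit C X)" "idm C Y" "idm C Y", symmetric]
      triangle[of I X] objs by (simp add: I_def)
  also have "\<dots> = cmp C (tensm C (runit C I) (idm C (tens C X Y))) (assoc C (tens C I I) X Y)"
    using assoc_natural[of "runit C I" "idm C X" "idm C Y"] objs by (simp add: I_def)
  also have "\<dots> = cmp C (tensm C (idm C I) (lunit C (tens C X Y)))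
                     (cmp C (assoc C I I (tens C X Y)) (assoc C (tens C I I) X Y))"
    using cmp_assoc_left[OF triangle[of I "tens C X Y"], symmetric] objs by (simp add: I_def)
  also have "\<dots> = cmp C (tensm C (idm C I) (cmp C (lunit C (tens C X Y)) (assoc C I X Y))) M"
    unfolding M_def
    using pentagon[of I I X Y] cmp_assoc_left[OF interchange[of "idm C I" "idm C I" "assoc C I X Y"
        "lunit C (tens C X Y)", symmetric]] objs
    by (simp add: I_def)
  finally have "tensm C (idm C I) (tensm C (lunit C X) (idm C Y))
      = tensm C (idm C I) (cmp C (lunit C (tens C X Y)) (assoc C I X Y))"
    by (rule iso_cancel_right[OF M(1), rotated -1]) (use objs M in \<open>simp_all add: I_def\<close>)
  then show ?thesis
    unfolding I_def by (rule tensm_unit_left_inj[symmetric, rotated -1]) (use X Y in simp_all)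
qed

lemma lunit_conjugate [simp]:
  assumes "f \<in> mor C" "dom C f = X" "cod C f = Y"
  shows "cmp C (lunit C Y) (cmp C (tensm C (idm C (unitob C)) f) (cinv C (lunit C X))) = f"
  using assms(1) cmp_assoc_left[OF lunit_natural[of f]] unfolding assms(2,3)[symmetric]
  by simp

lemma runit_conjugate [simp]:
  assumes "f \<in> mor C" "dom C f = X" "cod C f = Y"
  shows "cmp C (runit C Y) (cmp C (tensm C f (idm C (unitob C))) (cinv C (runit C X))) = f"
  using assms(1) cmp_assoc_left[OF runit_natural[of f]] unfolding assms(2,3)[symmetric]
  by simp

lemma lunit_unit_eq_runit_unit: "lunit C (unitob C) = runit C (unitob C)"
proof -
  define I where "I = unitob C"
  have I: "I \<in> obj C" by (simp add: I_def)
  have "tensm C (idm C I) (lunit C I) = lunit C (tens C I I)"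
    by (rule iso_cancel_left[OF iso_lunit[OF I]])
       (use lunit_natural[of "lunit C I"] I in \<open>simp_all add: I_def\<close>)
  then have "tensm C (lunit C I) (idm C I) = tensm C (runit C I) (idm C I)"
    using lunit_tens[of I I] triangle[of I I] I by (simp add: I_def)
  then show ?thesis
    unfolding I_def by (rule tensm_unit_right_inj[rotated -1]) simp_all
qed

end

section \<open>The non-strictification\<close>

lemma mprod_eq_None_iff: "mprod s t = None \<longleftrightarrow> s = None \<and> t = None"
  by (cases s; cases t) auto

lemma mprod_None_right [simp]: "mprod s None = s"
  by (cases s) auto

lemma msize_mprod: "msize (mprod s t) = msize s + msize t"
  by (cases s; cases t) (auto simp: msize_def)

lemma qtens_qunit_left [simp]: "qtens qunit x = x"
  by (simp add: qtens_def qunit_def)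

lemma qtens_qunit_right [simp]: "qtens x qunit = x"
  by (simp add: qtens_def qunit_def)

lemma qtens_eq_qunit_iff [simp]: "qtens x y = qunit \<longleftrightarrow> x = qunit \<and> y = qunit"
  by (cases x; cases y) (auto simp: qtens_def qunit_def mprod_eq_None_iff)

context monoidal
begin

definition is_qobj :: "'o qobj \<Rightarrow> bool" where
  "is_qobj x \<longleftrightarrow> set (fst x) \<subseteq> obj C \<and> length (fst x) = msize (snd x)"

lemma obj_Cq [simp]: "x \<in> obj (Cq C) \<longleftrightarrow> is_qobj x"
  by (simp add: Cq_def is_qobj_def)
lemma mor_Cq [simp]:
  "(x, y, f) \<in> mor (Cq C) \<longleftrightarrow>
     is_qobj x \<and> is_qobj y \<and> f \<in> mor C \<and> dom C f = Par C x \<and> cod C f = Par C y"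
  by (auto simp: Cq_def is_qobj_def hom_def)
lemma dom_Cq [simp]: "dom (Cq C) (x, y, f) = x"
  by (simp add: Cq_def)
lemma cod_Cq [simp]: "cod (Cq C) (x, y, f) = y"
  by (simp add: Cq_def)
lemma cmp_Cq [simp]: "cmp (Cq C) (y, z, g) (x, y', f) = (x, z, cmp C g f)"
  by (simp add: Cq_def)
lemma idm_Cq [simp]: "idm (Cq C) x = (x, x, idm C (Par C x))"
  by (simp add: Cq_def)
lemma tens_Cq [simp]: "tens (Cq C) = qtens"
  by (simp add: Cq_def)
lemma unitob_Cq [simp]: "unitob (Cq C) = qunit"
  by (simp add: Cq_def)
lemma lunit_Cq [simp]: "lunit (Cq C) x = (x, x, idm C (Par C x))"
  by (simp add: Cq_def)
lemma runit_Cq [simp]: "runit (Cq C) x = (x, x, idm C (Par C x))"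
  by (simp add: Cq_def)
lemma tensm_Cq [simp]:
  "tensm (Cq C) (x, y, f) (x', y', g)
   = (qtens x x', qtens y y', cmp C (qphi C y y') (cmp C (tensm C f g) (cinv C (qphi C x x'))))"
  by (simp add: Cq_def)

lemma tpar_in_obj: "set S \<subseteq> obj C \<Longrightarrow> length S = tsize t \<Longrightarrow> tpar C S t \<in> obj C"
proof (induction t arbitrary: S)
  case Leaf
  then show ?case by (cases S) auto
next
  case (Node a b)
  then show ?case
    by (simp, intro tens_in_obj Node.IH) (auto dest: in_set_takeD in_set_dropD)
qed

lemma Par_in_obj [simp]: "is_qobj x \<Longrightarrow> Par C x \<in> obj C"
  by (auto simp: is_qobj_def Par_def msize_def intro!: tpar_in_obj split: option.splits)

lemma is_qobj_qunit [simp]: "is_qobj qunit"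
  by (simp add: is_qobj_def qunit_def msize_def)

lemma Par_qunit [simp]: "Par C qunit = unitob C"
  by (simp add: Par_def qunit_def)

lemma is_qobj_qtens [simp]: "is_qobj x \<Longrightarrow> is_qobj y \<Longrightarrow> is_qobj (qtens x y)"
  by (auto simp: is_qobj_def qtens_def msize_mprod)

lemma Par_qtens:
  assumes "is_qobj x" "is_qobj y" "x \<noteq> qunit" "y \<noteq> qunit"
  shows "Par C (qtens x y) = tens C (Par C x) (Par C y)"
proof -
  have nonempty: "\<exists>t. snd z = Some t \<and> length (fst z) = tsize t" if "is_qobj z" "z \<noteq> qunit" for z
    using that by (cases z) (auto simp: is_qobj_def qunit_def msize_def split: option.splits)
  show ?thesis
    using nonempty[OF assms(1,3)] nonempty[OF assms(2,4)] by (auto simp: Par_def qtens_def)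
qed

lemma qphi_qunit_left: "qphi C qunit y = lunit C (Par C y)"
  by (simp add: qphi_def)

lemma qphi_qunit_right: "qphi C x qunit = runit C (Par C x)"
  by (simp add: qphi_def lunit_unit_eq_runit_unit)

lemma qphi_nonunit: "x \<noteq> qunit \<Longrightarrow> y \<noteq> qunit \<Longrightarrow> qphi C x y = idm C (Par C (qtens x y))"
  by (simp add: qphi_def)

lemma qphi_iso_hom:
  assumes "is_qobj x" "is_qobj y"
  shows "qphi C x y \<in> mor C \<and> dom C (qphi C x y) = tens C (Par C x) (Par C y)
         \<and> cod C (qphi C x y) = Par C (qtens x y) \<and> iso C (qphi C x y)"
  using assms by (cases "x = qunit"; cases "y = qunit")
    (simp_all add: qphi_qunit_left qphi_qunit_right qphi_nonunit Par_qtens)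

lemma qphi_in_mor [simp]: "is_qobj x \<Longrightarrow> is_qobj y \<Longrightarrow> qphi C x y \<in> mor C"
  using qphi_iso_hom by blast
lemma dom_qphi [simp]:
  "is_qobj x \<Longrightarrow> is_qobj y \<Longrightarrow> dom C (qphi C x y) = tens C (Par C x) (Par C y)"
  using qphi_iso_hom by blast
lemma cod_qphi [simp]: "is_qobj x \<Longrightarrow> is_qobj y \<Longrightarrow> cod C (qphi C x y) = Par C (qtens x y)"
  using qphi_iso_hom by blast
lemma iso_qphi [simp]: "is_qobj x \<Longrightarrow> is_qobj y \<Longrightarrow> iso C (qphi C x y)"
  using qphi_iso_hom by blast

lemma category_Cq: "category (Cq C)"
  unfolding category_def hom_def Ball_def split_paired_All
  by (auto simp del: tens_Cq)

lemma iso_Cq: "(x, y, f) \<in> mor (Cq C) \<Longrightarrow> iso C f \<Longrightarrow> iso (Cq C) (x, y, f)"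
  unfolding iso_def[of "Cq C"] hom_def
  by (rule conjI, simp, rule bexI[of _ "(y, x, cinv C f)"]) auto

definition qassoc :: "'o qobj \<Rightarrow> 'o qobj \<Rightarrow> 'o qobj \<Rightarrow> 'm" where
  "qassoc x y z = (if x = qunit \<or> y = qunit \<or> z = qunit then idm C (Par C (qtens (qtens x y) z))
                   else assoc C (Par C x) (Par C y) (Par C z))"

lemma assoc_Cq [simp]:
  "assoc (Cq C) x y z = (qtens (qtens x y) z, qtens x (qtens y z), qassoc x y z)"
  by (simp add: Cq_def qassoc_def)

lemma qassoc_qunit [simp]:
  "qassoc qunit y z = idm C (Par C (qtens y z))"
  "qassoc x qunit z = idm C (Par C (qtens x z))"
  "qassoc x y qunit = idm C (Par C (qtens x y))"
  by (simp_all add: qassoc_def)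

lemma qassoc_iso_hom:
  assumes "is_qobj x" "is_qobj y" "is_qobj z"
  shows "qassoc x y z \<in> mor C \<and> dom C (qassoc x y z) = Par C (qtens (qtens x y) z)
         \<and> cod C (qassoc x y z) = Par C (qtens x (qtens y z)) \<and> iso C (qassoc x y z)"
  using assms by (auto simp: qassoc_def Par_qtens)

lemma qassoc_in_mor [simp]: "is_qobj x \<Longrightarrow> is_qobj y \<Longrightarrow> is_qobj z \<Longrightarrow> qassoc x y z \<in> mor C"
  using qassoc_iso_hom by blast
lemma dom_qassoc [simp]:
  "is_qobj x \<Longrightarrow> is_qobj y \<Longrightarrow> is_qobj z \<Longrightarrow> dom C (qassoc x y z) = Par C (qtens (qtens x y) z)"
  using qassoc_iso_hom by blast
lemma cod_qassoc [simp]: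
  "is_qobj x \<Longrightarrow> is_qobj y \<Longrightarrow> is_qobj z \<Longrightarrow> cod C (qassoc x y z) = Par C (qtens x (qtens y z))"
  using qassoc_iso_hom by blast

lemma pentagon_Cq:
  assumes "is_qobj w" "is_qobj x" "is_qobj y" "is_qobj z"
  shows "cmp (Cq C) (assoc (Cq C) w x (qtens y z)) (assoc (Cq C) (qtens w x) y z)
         = cmp (Cq C) (tensm (Cq C) (idm (Cq C) w) (assoc (Cq C) x y z))
             (cmp (Cq C) (assoc (Cq C) w (qtens x y) z) (tensm (Cq C) (assoc (Cq C) w x y) (idm (Cq C) z)))"
  using assms pentagon[of "Par C w" "Par C x" "Par C y" "Par C z"]
  by (cases "w = qunit"; cases "x = qunit"; cases "y = qunit"; cases "z = qunit")
     (simp_all add: qassoc_def qphi_qunit_left qphi_qunit_right qphi_nonunit Par_qtens)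

definition qphi_assocl :: "'o qobj \<Rightarrow> 'o qobj \<Rightarrow> 'o qobj \<Rightarrow> 'm" where
  "qphi_assocl x y z = cmp C (qphi C (qtens x y) z) (tensm C (qphi C x y) (idm C (Par C z)))"

definition qphi_assocr :: "'o qobj \<Rightarrow> 'o qobj \<Rightarrow> 'o qobj \<Rightarrow> 'm" where
  "qphi_assocr x y z = cmp C (qphi C x (qtens y z)) (tensm C (idm C (Par C x)) (qphi C y z))"

lemma qphi_assocl_iso_hom:
  assumes "is_qobj x" "is_qobj y" "is_qobj z"
  shows "qphi_assocl x y z \<in> mor C
         \<and> dom C (qphi_assocl x y z) = tens C (tens C (Par C x) (Par C y)) (Par C z)
         \<and> cod C (qphi_assocl x y z) = Par C (qtens (qtens x y) z) \<and> iso C (qphi_assocl x y z)"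
  using assms by (simp add: qphi_assocl_def iso_cmp iso_tensm)

lemma qphi_assocr_iso_hom:
  assumes "is_qobj x" "is_qobj y" "is_qobj z"
  shows "qphi_assocr x y z \<in> mor C
         \<and> dom C (qphi_assocr x y z) = tens C (Par C x) (tens C (Par C y) (Par C z))
         \<and> cod C (qphi_assocr x y z) = Par C (qtens x (qtens y z))"
  using assms by (simp add: qphi_assocr_def)

text \<open>When a factor is empty, \<open>qassoc\<close> is an identity and the equation is one of Kelly's
  identities \<open>lunit_tens\<close>, \<open>runit_tens\<close> or the triangle axiom.\<close>

lemma qassoc_coherent:
  assumes "is_qobj x" "is_qobj y" "is_qobj z"
  shows "cmp C (qassoc x y z) (qphi_assocl x y z)
         = cmp C (qphi_assocr x y z) (assoc C (Par C x) (Par C y) (Par C z))"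
  using assms runit_natural[of "lunit C (Par C y)"] runit_natural[of "runit C (Par C x)"]
  by (cases "x = qunit"; cases "y = qunit"; cases "z = qunit")
     (simp_all add: qphi_assocl_def qphi_assocr_def qassoc_def qphi_qunit_left qphi_qunit_right
        qphi_nonunit Par_qtens lunit_tens runit_tens triangle cmp_assoc_left[OF triangle]
        cmp_assoc_left[OF runit_tens])

lemma qphi_natural:
  assumes "(x, x', f) \<in> mor (Cq C)" "(y, y', g) \<in> mor (Cq C)"
  shows "cmp C (snd (snd (tensm (Cq C) (x, x', f) (y, y', g)))) (qphi C x y)
         = cmp C (qphi C x' y') (tensm C f g)"
  using assms by simp

lemma qphi_assocl_natural:
  assumes F: "(x, x', f) \<in> mor (Cq C)" and G: "(y, y', g) \<in> mor (Cq C)" and H: "(z, z', h) \<in> mor (Cq C)"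
  shows "cmp C (snd (snd (tensm (Cq C) (tensm (Cq C) (x, x', f) (y, y', g)) (z, z', h)))) (qphi_assocl x y z)
         = cmp C (qphi_assocl x' y' z') (tensm C (tensm C f g) h)"
proof -
  define u where "u = snd (snd (tensm (Cq C) (x, x', f) (y, y', g)))"
  have FG: "(qtens x y, qtens x' y', u) \<in> mor (Cq C)"
    using F G by (simp add: u_def)
  have "cmp C (snd (snd (tensm (Cq C) (tensm (Cq C) (x, x', f) (y, y', g)) (z, z', h)))) (qphi_assocl x y z)
      = cmp C (qphi C (qtens x' y') z') (cmp C (tensm C u h) (tensm C (qphi C x y) (idm C (Par C z))))"
    using F G H cmp_assoc_left[OF qphi_natural[OF FG H]] by (simp add: qphi_assocl_def u_def)
  also have "\<dots> = cmp C (qphi C (qtens x' y') z') (tensm C (cmp C (qphi C x' y') (tensm C f g)) h)"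
    using F G H interchange[of "qphi C x y" u "idm C (Par C z)" h] qphi_natural[OF F G] by (simp add: u_def)
  also have "\<dots> = cmp C (qphi_assocl x' y' z') (tensm C (tensm C f g) h)"
    using F G H interchange[of "tensm C f g" "qphi C x' y'" h "idm C (Par C z')"]
    by (simp add: qphi_assocl_def)
  finally show ?thesis .
qed

lemma qphi_assocr_natural:
  assumes F: "(x, x', f) \<in> mor (Cq C)" and G: "(y, y', g) \<in> mor (Cq C)" and H: "(z, z', h) \<in> mor (Cq C)"
  shows "cmp C (snd (snd (tensm (Cq C) (x, x', f) (tensm (Cq C) (y, y', g) (z, z', h))))) (qphi_assocr x y z)
         = cmp C (qphi_assocr x' y' z') (tensm C f (tensm C g h))"
proof -
  define u where "u = snd (snd (tensm (Cq C) (y, y', g) (z, z', h)))"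
  have GH: "(qtens y z, qtens y' z', u) \<in> mor (Cq C)"
    using G H by (simp add: u_def)
  have "cmp C (snd (snd (tensm (Cq C) (x, x', f) (tensm (Cq C) (y, y', g) (z, z', h))))) (qphi_assocr x y z)
      = cmp C (qphi C x' (qtens y' z')) (cmp C (tensm C f u) (tensm C (idm C (Par C x)) (qphi C y z)))"
    using F G H cmp_assoc_left[OF qphi_natural[OF F GH]] by (simp add: qphi_assocr_def u_def)
  also have "\<dots> = cmp C (qphi C x' (qtens y' z')) (tensm C f (cmp C (qphi C y' z') (tensm C g h)))"
    using F G H interchange[of "idm C (Par C x)" f "qphi C y z" u] qphi_natural[OF G H] by (simp add: u_def)
  also have "\<dots> = cmp C (qphi_assocr x' y' z') (tensm C f (tensm C g h))"
    using F G H interchange[of f "idm C (Par C x')" "tensm C g h" "qphi C y' z'"]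
    by (simp add: qphi_assocr_def)
  finally show ?thesis .
qed

lemma assoc_Cq_natural:
  assumes F: "(x, x', f) \<in> mor (Cq C)" and G: "(y, y', g) \<in> mor (Cq C)" and H: "(z, z', h) \<in> mor (Cq C)"
  shows "cmp (Cq C) (assoc (Cq C) x' y' z') (tensm (Cq C) (tensm (Cq C) (x, x', f) (y, y', g)) (z, z', h))
         = cmp (Cq C) (tensm (Cq C) (x, x', f) (tensm (Cq C) (y, y', g) (z, z', h))) (assoc (Cq C) x y z)"
proof -
  define L where "L = snd (snd (tensm (Cq C) (tensm (Cq C) (x, x', f) (y, y', g)) (z, z', h)))"
  define R where "R = snd (snd (tensm (Cq C) (x, x', f) (tensm (Cq C) (y, y', g) (z, z', h))))"
  have objs: "is_qobj x" "is_qobj x'" "is_qobj y" "is_qobj y'" "is_qobj z" "is_qobj z'"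
    and mors: "f \<in> mor C" "g \<in> mor C" "h \<in> mor C"
    and ends: "dom C f = Par C x" "cod C f = Par C x'" "dom C g = Par C y" "cod C g = Par C y'"
      "dom C h = Par C z" "cod C h = Par C z'"
    using F G H by auto
  note facts = objs mors ends qphi_assocl_iso_hom qphi_assocr_iso_hom
  have L: "L \<in> mor C" "dom C L = Par C (qtens (qtens x y) z)" "cod C L = Par C (qtens (qtens x' y') z')"
    using facts by (auto simp: L_def)
  have R: "R \<in> mor C" "dom C R = Par C (qtens x (qtens y z))" "cod C R = Par C (qtens x' (qtens y' z'))"
    using facts by (auto simp: R_def)
  have "cmp C (cmp C (qassoc x' y' z') L) (qphi_assocl x y z)
      = cmp C (qassoc x' y' z') (cmp C (qphi_assocl x' y' z') (tensm C (tensm C f g) h))"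
    using facts L qphi_assocl_natural[OF F G H] by (simp add: L_def)
  also have "\<dots> = cmp C (qphi_assocr x' y' z') (cmp C (tensm C f (tensm C g h)) (assoc C (Par C x) (Par C y) (Par C z)))"
    using facts cmp_assoc_left[OF qassoc_coherent[of x' y' z']] assoc_natural[OF mors] by simp
  also have "\<dots> = cmp C (cmp C R (qassoc x y z)) (qphi_assocl x y z)"
    using facts R cmp_assoc_left[OF qphi_assocr_natural[OF F G H]] qassoc_coherent[of x y z]
    by (simp add: R_def)
  finally have "cmp C (qassoc x' y' z') L = cmp C R (qassoc x y z)"
    by (rule iso_cancel_right[of "qphi_assocl x y z", rotated -1]) (use facts L R in simp_all)
  then show ?thesis
    by (simp add: L_def R_def)
qed

lemma Ball_mor_Cq: "(\<forall>F\<in>mor (Cq C). P F) \<longleftrightarrow> (\<forall>x y f. (x, y, f) \<in> mor (Cq C) \<longrightarrow> P (x, y, f))"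
  by (metis prod_cases3)

lemma monoidal_category_Cq: "monoidal_category (Cq C)"
  unfolding monoidal_category_def Ball_mor_Cq
  by (intro conjI allI impI ballI; simp only: category_Cq tens_Cq unitob_Cq obj_Cq dom_Cq cod_Cq;
      (rule assoc_Cq_natural pentagon_Cq; assumption)?;
      auto simp: hom_def interchange qassoc_iso_hom qphi_qunit_left qphi_qunit_right
        intro!: iso_Cq)

section \<open>The embedding \<open>j\<close>\<close>

lemma is_qobj_jo [simp]: "X \<in> obj C \<Longrightarrow> is_qobj (jo X)"
  by (simp add: is_qobj_def jo_def msize_def)

lemma jo_neq_qunit [simp]: "jo X \<noteq> qunit"
  by (simp add: jo_def qunit_def)

lemma Par_jo [simp]: "Par C (jo X) = X"
  by (simp add: jo_def Par_def)

lemma not_strict_Cq: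
  assumes "X \<in> obj C"
  shows "\<not> strict_monoidal (Cq C)"
proof
  assume "strict_monoidal (Cq C)"
  then have "qtens (qtens (jo X) (jo X)) (jo X) = qtens (jo X) (qtens (jo X) (jo X))"
    unfolding strict_monoidal_def tens_Cq by (metis assms is_qobj_jo obj_Cq)
  then show False
    by (simp add: jo_def qtens_def)
qed

lemma functor_jo: "functor C (Cq C) jo (jm C)"
  unfolding functor_def using category category_Cq by (auto simp: jm_def hom_def)

lemma qtens_jo_jo [simp]: "qtens (jo X) (jo Y) = ([X, Y], Some (Node Leaf Leaf))"
  by (simp add: jo_def qtens_def)

lemma is_qobj_pair [simp]: "X \<in> obj C \<Longrightarrow> Y \<in> obj C \<Longrightarrow> is_qobj ([X, Y], Some (Node Leaf Leaf))"
  by (simp add: is_qobj_def msize_def)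

lemma Par_pair [simp]: "Par C ([X, Y], Some (Node Leaf Leaf)) = tens C X Y"
  by (simp add: Par_def)

lemma pair_neq_qunit [simp]: "([X, Y], Some (Node Leaf Leaf)) \<noteq> qunit"
  by (simp add: qunit_def)

lemma strong_monoidal_jo: "strong_monoidal_functor C (Cq C) jo (jm C) (ju C) (jeta C)"
  unfolding strong_monoidal_functor_def
proof (intro conjI ballI)
  show "ju C \<in> hom (Cq C) (unitob (Cq C)) (jo (unitob C))" "iso (Cq C) (ju C)"
    by (auto simp: ju_def hom_def intro: iso_Cq)
  fix X Y Z assume "X \<in> obj C" "Y \<in> obj C" "Z \<in> obj C"
  then show "jeta C X Y \<in> hom (Cq C) (tens (Cq C) (jo X) (jo Y)) (jo (tens C X Y))"
    and "iso (Cq C) (jeta C X Y)"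
    and "cmp (Cq C) (jm C (assoc C X Y Z))
          (cmp (Cq C) (jeta C (tens C X Y) Z) (tensm (Cq C) (jeta C X Y) (idm (Cq C) (jo Z))))
        = cmp (Cq C) (jeta C X (tens C Y Z))
          (cmp (Cq C) (tensm (Cq C) (idm (Cq C) (jo X)) (jeta C Y Z)) (assoc (Cq C) (jo X) (jo Y) (jo Z)))"
    and "cmp (Cq C) (jm C (lunit C X)) (cmp (Cq C) (jeta C (unitob C) X) (tensm (Cq C) (ju C) (idm (Cq C) (jo X))))
        = lunit (Cq C) (jo X)"
    and "cmp (Cq C) (jm C (runit C X)) (cmp (Cq C) (jeta C X (unitob C)) (tensm (Cq C) (idm (Cq C) (jo X)) (ju C)))
        = runit (Cq C) (jo X)"
    by (auto simp: jeta_def jm_def ju_def hom_def qphi_nonunit qphi_qunit_left qphi_qunit_right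
        Par_qtens qassoc_def intro: iso_Cq)
next
  fix f g assume "f \<in> mor C" "g \<in> mor C"
  then show "cmp (Cq C) (jeta C (cod C f) (cod C g)) (tensm (Cq C) (jm C f) (jm C g))
           = cmp (Cq C) (jm C (tensm C f g)) (jeta C (dom C f) (dom C g))"
    by (simp add: jeta_def jm_def qphi_nonunit)
qed (use monoidal_category monoidal_category_Cq functor_jo in auto)

lemma equivalence_jo: "equivalence C (Cq C) jo (jm C)"
  unfolding equivalence_def
proof (intro conjI exI)
  show "functor C (Cq C) jo (jm C)"
    by (rule functor_jo)
  show "functor (Cq C) C (Par C) (\<lambda>F. snd (snd F))"
    unfolding functor_def hom_def Ball_mor_Cq using category category_Cq by auto
  show "nat_iso C C (\<lambda>X. X) (\<lambda>f. f) (\<lambda>X. Par C (jo X)) (\<lambda>f. snd (snd (jm C f))) (idm C)"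
    unfolding nat_iso_def by (auto simp: hom_def jm_def)
  show "nat_iso (Cq C) (Cq C) (\<lambda>x. jo (Par C x)) (\<lambda>F. jm C (snd (snd F))) (\<lambda>x. x) (\<lambda>F. F)
          (\<lambda>x. (jo (Par C x), x, idm C (Par C x)))"
    unfolding nat_iso_def Ball_mor_Cq by (auto simp: hom_def jm_def intro!: iso_Cq)
qed

end

theorem mainTheorem6:
  fixes C :: "('o, 'm) moncat"
  assumes "monoidal_category C"
  shows "monoidal_category (Cq C)
       \<and> (obj C \<noteq> {} \<longrightarrow> \<not> strict_monoidal (Cq C))
       \<and> strong_monoidal_functor C (Cq C) jo (jm C) (ju C) (jeta C)
       \<and> equivalence C (Cq C) jo (jm C)"
proof -
  interpret monoidal C by (rule monoidal.intro) (rule assms)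
  show ?thesis
    using monoidal_category_Cq not_strict_Cq strong_monoidal_jo equivalence_jo by blast
qed

end
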